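(* Let $q\ge2$, $n\ge1$, $m=n+1$, $R\in[m]$ and $r\equiv m\pmod R$ with $0\le r<R$. Then $$\max_{{\boldsymbol y}\in\Sigma_{q,R}^m}\mathsf{H}^{\mathsf{In}}_{1\text{-}\mathsf{Ins}}({\boldsymbol y})=\log_2 m-\frac1m\left(r\left\lceil\tfrac mR\right\rceil\log_2\left\lceil\tfrac mR\right\rceil+(R-r)\left\lfloor\tfrac mR\right\rfloor\log_2\left\lfloor\tfrac mR\right\rfloor\right),$$ and the maximum is attained only by balanced channel outputs.
   Context: $\Sigma_q=\{0,\dots,q-1\}$. For sequences ${\boldsymbol x}$ of length $\ell$ and ${\boldsymbol y}$ of length $N\ge\ell$, $\omega_{{\boldsymbol x}}({\boldsymbol y})$ is the number of index tuples $1\le i_1<\dots<i_\ell\le N$ with $y_{i_j}=x_j$. The $1$-insertion channel with input length $n$ maps ${\boldsymbol x}\in\Sigma_q^n$ to ${\boldsymbol y}\in\Sigma_q^{n+1}$ with probability $\omega_{{\boldsymbol x}}({\boldsymbol y})/((n+1)q)$; under uniform transmission ($X$ uniform on $\Sigma_q^n$), $\mathsf{H}^{\mathsf{In}}_{1\text{-}\mathsf{Ins}}({\boldsymbol y})=H(X\mid Y={\boldsymbol y})$ in bits, with posterior $P({\boldsymbol x}\mid {\boldsymbol y})=\Pr\{{\boldsymbol y}\mid{\boldsymbol x}\}/\sum_{{\boldsymbol x}'}\Pr\{{\boldsymbol y}\mid{\boldsymbol x}'\}$. A run is a maximal block of identical consecutive symbols; $\Sigma_{q,R}^m$ is the set of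 sequences in $\Sigma_q^m$ with exactly $R$ runs. A sequence in $\Sigma_{q,R}^m$ is balanced if it has $r$ runs of length $\lceil m/R\rceil$ and $R-r$ runs of length $\lfloor m/R\rfloor$, where $r\equiv m\pmod R$. Convention $0\log0=0$. *)

theory Defs
  imports Complex_Main "HOL-Library.Multiset"
begin

definition seqs :: "nat \<Rightarrow> nat \<Rightarrow> nat list set" where
  "seqs q m = {x. length x = m \<and> set x \<subseteq> {0..<q}}"

text \<open>omega_x(y): number of index tuples i_1 < ... < i_l (0-based) with y_{i_j} = x_j,
  i.e. number of index sets I of size l whose increasing enumeration reads x in y.\<close>
definition omega :: "nat list \<Rightarrow> nat list \<Rightarrow> nat" where
  "omega x y = card {I. I \<subseteq> {0..<length y} \<and> card I = length x \<and>
                        map (\<lambda>i. y ! i) (sorted_list_of_set I) = x}"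

definition ins_prob :: "nat \<Rightarrow> nat \<Rightarrow> nat list \<Rightarrow> nat list \<Rightarrow> real" where
  "ins_prob q n x y = real (omega x y) / (real (n + 1) * real q)"

text \<open>Posterior under uniform input distribution on Sigma_q^n.\<close>
definition posterior :: "nat \<Rightarrow> nat \<Rightarrow> nat list \<Rightarrow> nat list \<Rightarrow> real" where
  "posterior q n y x = ins_prob q n x y / (\<Sum>x'\<in>seqs q n. ins_prob q n x' y)"

definition H_in :: "nat \<Rightarrow> nat \<Rightarrow> nat list \<Rightarrow> real" where
  "H_in q n y = - (\<Sum>x\<in>seqs q n. (let p = posterior q n y x in
                                      if p = 0 then 0 else p * log 2 p))"

function run_lengths :: "nat list \<Rightarrow> nat list" where
  "run_lengths [] = []"
| "run_lengths (a # xs) =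
     length (takeWhile (\<lambda>b. b = a) (a # xs)) # run_lengths (dropWhile (\<lambda>b. b = a) xs)"
  by pat_completeness auto
termination
  by (relation "measure length") (auto simp: le_imp_less_Suc length_dropWhile_le)

definition num_runs :: "nat list \<Rightarrow> nat" where
  "num_runs y = length (run_lengths y)"

definition seqs_runs :: "nat \<Rightarrow> nat \<Rightarrow> nat \<Rightarrow> nat list set" where
  "seqs_runs q R m = {y \<in> seqs q m. num_runs y = R}"

definition balanced :: "nat \<Rightarrow> nat \<Rightarrow> nat list \<Rightarrow> bool" where
  "balanced R m y \<longleftrightarrow>
     mset (run_lengths y) =
       replicate_mset (m mod R) (nat \<lceil>real m / real R\<rceil>)
     + replicate_mset (R - m mod R) (nat \<lfloor>real m / real R\<rfloor>)"

end

(* A single insertion produces y from x exactly when x arises from y by deleting one symbol.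
   Deleting any symbol of a run of length L gives the same sequence, while deletions from
   different runs give different sequences. Hence, under uniform input, the posterior of x is its
   multiplicity among the m single deletions of y, these multiplicities are the run lengths of y,
   and H(X | Y = y) = log m - (1/m) * (sum of L log L over the runs of y). Maximising the entropy
   thus means minimising the sum of L log L over compositions of m into R positive parts. Since
   L log L has strictly increasing increments, it lies on or above its secant through floor(m/R)
   and floor(m/R) + 1, touching it only there, and the secant sums to the same value over every
   composition; so the minimum is attained exactly by the balanced compositions. *)

theory Submission
  imports Defs
begin

section \<open>Runs\<close>

lemma run_lengths_replicate_append:
  assumes "k > 0" "z = [] \<or> hd z \<noteq> a"
  shows "run_lengths (replicate k a @ z) = k # run_lengths z"
proof -
  obtain k' where k: "k = Suc k'" using assms(1) by (cases k) auto
  have "takeWhile (\<lambda>b. b = a) z = []" "dropWhile (\<lambda>b. b = a) z = z"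
    using assms(2) by (cases z; simp)+
  then have "takeWhile (\<lambda>b. b = a) (replicate k' a @ z) = replicate k' a"
    and "dropWhile (\<lambda>b. b = a) (replicate k' a @ z) = z"
    by (simp_all add: takeWhile_append dropWhile_append)
  then show ?thesis by (simp add: k)
qed

lemma first_runE:
  assumes "y \<noteq> []"
  obtains k a z where "k > 0" "y = replicate k a @ z" "z = [] \<or> hd z \<noteq> a"
proof -
  obtain a where a: "hd y = a" by simp
  let ?t = "takeWhile (\<lambda>b. b = a) y" and ?z = "dropWhile (\<lambda>b. b = a) y"
  have "replicate (length ?t) a = ?t"
    by (rule replicate_length_same) (auto dest: set_takeWhileD)
  then have "y = replicate (length ?t) a @ ?z" by (metis takeWhile_dropWhile_id)
  moreover have "length ?t > 0" using assms a by (cases y) auto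
  moreover have "?z = [] \<or> hd ?z \<noteq> a" using hd_dropWhile[of "\<lambda>b. b = a" y] by auto
  ultimately show thesis using that by blast
qed

lemma run_induct [case_names Nil first_run]:
  assumes "P []"
    and "\<And>k a z. k > 0 \<Longrightarrow> z = [] \<or> hd z \<noteq> a \<Longrightarrow> P z \<Longrightarrow> P (replicate k a @ z)"
  shows "P y"
proof (induction "length y" arbitrary: y rule: less_induct)
  case less
  show ?case
  proof (cases "y = []")
    case False
    then obtain k a z where "k > 0" "y = replicate k a @ z" "z = [] \<or> hd z \<noteq> a"
      by (rule first_runE)
    then show ?thesis using less assms(2) by simp
  qed (simp add: assms(1))
qed

lemma sum_list_run_lengths: "sum_list (run_lengths y) = length y"
  by (induction y rule: run_induct) (simp_all add: run_lengths_replicate_append)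

section \<open>Single deletions\<close>

definition deletion :: "nat \<Rightarrow> 'a list \<Rightarrow> 'a list" where
  "deletion i y = take i y @ drop (Suc i) y"

definition deletions :: "'a list \<Rightarrow> 'a list list" where
  "deletions y = map (\<lambda>i. deletion i y) [0..<length y]"

lemma length_deletion: "i < length y \<Longrightarrow> length (deletion i y) = length y - 1"
  by (simp add: deletion_def)

lemma set_deletion_subset: "set (deletion i y) \<subseteq> set y"
  using set_take_subset set_drop_subset by (fastforce simp: deletion_def)

lemma set_deletions_subset_seqs: "y \<in> seqs q (Suc n) \<Longrightarrow> set (deletions y) \<subseteq> seqs q n"
  using set_deletion_subset by (fastforce simp: deletions_def seqs_def length_deletion)

lemma deletion_eq_map_nth:
  assumes "i < length y"
  shows "deletion i y = map ((!) y) (sorted_list_of_set ({0..<length y} - {i}))"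
proof -
  have "sorted_list_of_set ({0..<length y} - {i}) = [0..<i] @ [Suc i..<length y]"
    using assms by (intro sorted_list_of_set_unique[THEN iffD1]) (auto simp: sorted_wrt_append)
  then show ?thesis
    using assms by (auto simp: deletion_def nth_append intro: nth_equalityI)
qed

lemma omega_eq_count_deletions:
  assumes "length y = Suc (length x)"
  shows "omega x y = count_list (deletions y) x"
proof -
  let ?U = "{0..<length y}"
  let ?hits = "{i. i < length y \<and> deletion i y = x}"
  have witnesses: "{I. I \<subseteq> ?U \<and> card I = length x \<and> map ((!) y) (sorted_list_of_set I) = x}
      = (\<lambda>i. ?U - {i}) ` ?hits"
  proof (intro set_eqI iffI)
    fix I assume I: "I \<in> {I. I \<subseteq> ?U \<and> card I = length x \<and> map ((!) y) (sorted_list_of_set I) = x}"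
    then have "card (?U - I) = 1"
      using assms by (subst card_Diff_subset) (auto intro: finite_subset)
    then obtain i where i: "?U - I = {i}" by (rule card_1_singletonE)
    then have "i < length y" "I = ?U - {i}" using I by auto
    then show "I \<in> (\<lambda>i. ?U - {i}) ` ?hits" using I deletion_eq_map_nth by auto
  next
    fix I assume "I \<in> (\<lambda>i. ?U - {i}) ` ?hits"
    then obtain i where i: "i < length y" "deletion i y = x" "I = ?U - {i}" by auto
    then show "I \<in> {I. I \<subseteq> ?U \<and> card I = length x \<and> map ((!) y) (sorted_list_of_set I) = x}"
      using assms deletion_eq_map_nth[OF i(1)] by auto
  qed
  have inj: "inj_on (\<lambda>i. ?U - {i}) ?hits"
  proof (rule inj_onI)
    fix i j assume "i \<in> ?hits" "?U - {i} = ?U - {j}"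
    then have "i \<notin> ?U - {j}" by blast
    with \<open>i \<in> ?hits\<close> show "i = j" by simp
  qed
  have count: "count_list (deletions y) x = card ?hits"
    unfolding deletions_def count_list_eq_length_filter length_filter_conv_card
    by (rule arg_cong[where f = card]) auto
  show ?thesis unfolding omega_def witnesses card_image[OF inj] count ..
qed

lemma deletion_in_first_run:
  assumes "i < k"
  shows "deletion i (replicate k a @ z) = replicate (k - 1) a @ z"
proof -
  have "replicate i a @ replicate (k - Suc i) a = replicate (k - 1) a"
    using assms by (simp flip: replicate_add)
  then show ?thesis
    using assms by (simp add: deletion_def take_append drop_append min_def)
qed

lemma deletion_append_shift: "deletion (length u + j) (u @ z) = u @ deletion j z"
  by (simp add: deletion_def)

lemma deletions_replicate_append:
  "deletions (replicate k a @ z)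
     = replicate k (replicate (k - 1) a @ z) @ map ((@) (replicate k a)) (deletions z)"
proof -
  let ?y = "replicate k a @ z"
  have "[0..<length ?y] = [0..<k] @ map ((+) k) [0..<length z]"
    by (simp add: upt_add_eq_append[of 0 k]) (rule nth_equalityI; simp)
  moreover have "map (\<lambda>i. deletion i ?y) [0..<k] = replicate k (replicate (k - 1) a @ z)"
    by (rule nth_equalityI) (simp_all add: deletion_in_first_run)
  moreover have "deletion (k + j) ?y = replicate k a @ deletion j z" for j
    using deletion_append_shift[of "replicate k a"] by simp
  ultimately show ?thesis by (simp add: deletions_def)
qed

definition multiplicities :: "'a list \<Rightarrow> nat multiset" where
  "multiplicities xs = image_mset (count_list xs) (mset_set (set xs))"

lemma multiplicities_replicate_append_map:
  assumes "k > 0" "inj h" "u \<notin> h ` set zs"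
  shows "multiplicities (replicate k u @ map h zs) = add_mset k (multiplicities zs)"
proof -
  let ?xs = "replicate k u @ map h zs"
  have "count_list (map h zs) u = 0"
    using assms(3) by (simp add: count_list_0_iff)
  then have count_u: "count_list ?xs u = k"
    by (simp flip: count_mset)
  have count_h: "count_list ?xs (h w) = count_list zs w" if "w \<in> set zs" for w
  proof -
    have "count_list (replicate k u) (h w) = 0"
      using assms(3) that by (auto simp: count_list_0_iff)
    then show ?thesis by (simp add: count_list_map_conv[OF assms(2)])
  qed
  have "set ?xs = insert u (h ` set zs)"
    using assms(1) by auto
  then have "multiplicities ?xs = add_mset k (image_mset (count_list ?xs) (mset_set (h ` set zs)))"
    using assms(3) count_u by (simp add: multiplicities_def)
  also have "image_mset (count_list ?xs) (mset_set (h ` set zs))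
      = image_mset (count_list ?xs \<circ> h) (mset_set (set zs))"
    using inj_on_subset[OF assms(2)]
    by (simp add: image_mset_mset_set[symmetric] multiset.map_comp)
  also have "\<dots> = multiplicities zs"
    unfolding multiplicities_def using count_h by (intro image_mset_cong) simp
  finally show ?thesis .
qed

lemma multiplicities_deletions: "multiplicities (deletions y) = mset (run_lengths y)"
proof (induction y rule: run_induct)
  case Nil
  then show ?case by (simp add: multiplicities_def deletions_def)
next
  case (first_run k a z)
  have "replicate (k - 1) a @ z \<notin> (@) (replicate k a) ` set (deletions z)"
  proof
    assume "replicate (k - 1) a @ z \<in> (@) (replicate k a) ` set (deletions z)"
    then obtain w where w: "replicate (k - 1) a @ z = replicate k a @ w" "w \<in> set (deletions z)"
      by auto
    then have "z \<noteq> []" by (auto simp: deletions_def)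
    then have "(replicate (k - 1) a @ z) ! (k - 1) \<noteq> a"
      using first_run.hyps(2) by (simp add: nth_append hd_conv_nth)
    moreover have "(replicate k a @ w) ! (k - 1) = a"
      using first_run.hyps(1) by (simp add: nth_append)
    ultimately show False using w(1) by simp
  qed
  then show ?case
    using first_run
    by (simp add: deletions_replicate_append multiplicities_replicate_append_map inj_def
        run_lengths_replicate_append)
qed

section \<open>Entropy of a channel output\<close>

lemma finite_seqs: "finite (seqs q n)"
proof -
  have "seqs q n = {xs. set xs \<subseteq> {0..<q} \<and> length xs = n}"
    by (auto simp: seqs_def)
  then show ?thesis
    using finite_lists_length_eq[of "{0..<q}" n] by simp
qed

definition xlog2x :: "nat \<Rightarrow> real" where
  "xlog2x L = real L * log 2 (real L)"

lemma entropy_of_list_frequencies: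
  fixes D :: "'a list"
  assumes "finite S" "set D \<subseteq> S" "D \<noteq> []"
  defines "p x \<equiv> real (count_list D x) / real (length D)"
  shows "- (\<Sum>x\<in>S. if p x = 0 then 0 else p x * log 2 (p x))
       = log 2 (length D) - (\<Sum>L\<in>#multiplicities D. xlog2x L) / length D"
proof -
  let ?m = "real (length D)"
  have m: "?m > 0" using assms(3) by simp
  have "(\<Sum>x\<in>S. if p x = 0 then 0 else p x * log 2 (p x)) = (\<Sum>x\<in>set D. p x * log 2 (p x))"
    using assms(1,2) by (intro sum.mono_neutral_cong_right) (auto simp: p_def)
  also have "\<dots> = (\<Sum>x\<in>set D. xlog2x (count_list D x) / ?m - log 2 ?m * (count_list D x / ?m))"
  proof (intro sum.cong refl)
    fix x assume "x \<in> set D"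
    then have "count_list D x > 0" using count_list_0_iff[of D x] by simp
    then show "p x * log 2 (p x) = xlog2x (count_list D x) / ?m - log 2 ?m * (count_list D x / ?m)"
      using m by (simp add: p_def xlog2x_def log_divide algebra_simps diff_divide_distrib)
  qed
  also have "\<dots> = (\<Sum>L\<in>#multiplicities D. xlog2x L) / ?m - log 2 ?m"
  proof -
    have "(\<Sum>x\<in>set D. real (count_list D x)) = ?m"
      using sum_count_set[of D "set D"] by (simp flip: of_nat_sum)
    moreover have "(\<Sum>L\<in>#multiplicities D. xlog2x L) = (\<Sum>x\<in>set D. xlog2x (count_list D x))"
      by (simp add: multiplicities_def sum_unfold_sum_mset multiset.map_comp comp_def)
    ultimately show ?thesis
      using m by (simp add: sum_subtractf sum_divide_distrib[symmetric] sum_distrib_left[symmetric])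
  qed
  finally show ?thesis by simp
qed

lemma posterior_eq_deletion_frequency:
  assumes "y \<in> seqs q (Suc n)" "q > 0" "x \<in> seqs q n"
  shows "posterior q n y x = real (count_list (deletions y) x) / real (Suc n)"
proof -
  have ly: "length y = Suc n" using assms(1) by (simp add: seqs_def)
  have lD: "length (deletions y) = Suc n" using ly by (simp add: deletions_def)
  have prob: "ins_prob q n x' y = real (count_list (deletions y) x') / (real (Suc n) * real q)"
    if "x' \<in> seqs q n" for x'
    using that ly by (simp add: ins_prob_def seqs_def omega_eq_count_deletions)
  have "(\<Sum>x'\<in>seqs q n. count_list (deletions y) x') = Suc n"
    using sum_count_set[OF set_deletions_subset_seqs[OF assms(1)] finite_seqs] lD by simp
  then have "(\<Sum>x'\<in>seqs q n. real (count_list (deletions y) x')) = real (Suc n)"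
    by (metis of_nat_sum)
  then have "(\<Sum>x'\<in>seqs q n. ins_prob q n x' y) = 1 / real q"
    by (simp add: prob sum_divide_distrib[symmetric])
  then show ?thesis
    using assms(2) by (simp add: posterior_def prob[OF assms(3)])
qed

lemma H_in_eq_run_lengths:
  assumes "y \<in> seqs q (Suc n)" "q > 0"
  shows "H_in q n y = log 2 (Suc n) - (\<Sum>L\<in>#mset (run_lengths y). xlog2x L) / Suc n"
proof -
  let ?D = "deletions y"
  have lD: "length ?D = Suc n" using assms(1) by (simp add: seqs_def deletions_def)
  have "H_in q n y = - (\<Sum>x\<in>seqs q n. let p = real (count_list ?D x) / real (length ?D) in
                                         if p = 0 then 0 else p * log 2 p)"
    unfolding H_in_def lD
    by (intro arg_cong[where f = uminus] sum.cong refl) (simp add: posterior_eq_deletion_frequency assms)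
  also have "\<dots> = log 2 (length ?D) - (\<Sum>L\<in>#multiplicities ?D. xlog2x L) / length ?D"
    unfolding Let_def
    by (rule entropy_of_list_frequencies[OF finite_seqs set_deletions_subset_seqs[OF assms(1)]])
      (use lD in auto)
  finally show ?thesis
    by (simp add: lD multiplicities_deletions)
qed

section \<open>Balanced compositions\<close>

lemma secant_less_right:
  fixes g :: "nat \<Rightarrow> real"
  assumes "strict_mono (\<lambda>a. g (Suc a) - g a)" "2 \<le> j"
  shows "g f + real j * (g (Suc f) - g f) < g (f + j)"
  using assms(2)
proof (induction j rule: dec_induct)
  case base
  have "g (Suc f) - g f < g (Suc (Suc f)) - g (Suc f)"
    using strict_monoD[OF assms(1), of f "Suc f"] by simp
  then show ?case by (simp add: numeral_2_eq_2 algebra_simps)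
next
  case (step j)
  have "g (Suc f) - g f < g (Suc (f + j)) - g (f + j)"
    using strict_monoD[OF assms(1), of f "f + j"] step.hyps by simp
  then show ?case using step.IH by (simp add: algebra_simps)
qed

lemma secant_less_left:
  fixes g :: "nat \<Rightarrow> real"
  assumes "strict_mono (\<lambda>a. g (Suc a) - g a)" "1 \<le> j" "j \<le> f"
  shows "g f - real j * (g (Suc f) - g f) < g (f - j)"
  using assms(2,3)
proof (induction j rule: dec_induct)
  case base
  have "g (Suc (f - 1)) - g (f - 1) < g (Suc f) - g f"
    using strict_monoD[OF assms(1), of "f - 1" f] base by simp
  then show ?case using base by (simp add: algebra_simps)
next
  case (step j)
  have "g (Suc (f - Suc j)) - g (f - Suc j) < g (Suc f) - g f"
    using strict_monoD[OF assms(1), of "f - Suc j" f] step.prems by simp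
  moreover have "Suc (f - Suc j) = f - j" using step.prems by simp
  ultimately show ?case using step by (simp add: algebra_simps)
qed

lemma secant_less:
  fixes g :: "nat \<Rightarrow> real"
  assumes "strict_mono (\<lambda>a. g (Suc a) - g a)" "L \<noteq> f" "L \<noteq> Suc f"
  shows "g f + (real L - real f) * (g (Suc f) - g f) < g L"
proof (cases "f \<le> L")
  case True
  then show ?thesis
    using secant_less_right[OF assms(1), of "L - f" f] assms(2,3) by (simp add: of_nat_diff)
next
  case False
  then show ?thesis
    using secant_less_left[OF assms(1), of "f - L" f] by (simp add: of_nat_diff algebra_simps)
qed

lemma sum_mset_affine:
  "(\<Sum>L\<in>#M. a + real L * b) = real (size M) * a + real (sum_mset M) * b"
  by (induction M) (simp_all add: algebra_simps)

definition balanced_parts :: "nat \<Rightarrow> nat \<Rightarrow> nat multiset" where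
  "balanced_parts R m =
     replicate_mset (m mod R) (Suc (m div R)) + replicate_mset (R - m mod R) (m div R)"

lemma size_balanced_parts: "R > 0 \<Longrightarrow> size (balanced_parts R m) = R"
  by (simp add: balanced_parts_def)

lemma sum_mset_balanced_parts: "R > 0 \<Longrightarrow> sum_mset (balanced_parts R m) = m"
proof -
  assume "R > 0"
  then have "m mod R * Suc (m div R) + (R - m mod R) * (m div R) = R * (m div R) + m mod R"
    by (simp add: algebra_simps diff_mult_distrib order_less_imp_le)
  then show ?thesis by (simp add: balanced_parts_def)
qed

lemma set_balanced_parts: "set_mset (balanced_parts R m) \<subseteq> {m div R, Suc (m div R)}"
  by (auto simp: balanced_parts_def split: if_splits)

lemma eq_balanced_parts:
  assumes "set_mset M \<subseteq> {m div R, Suc (m div R)}" "size M = R" "sum_mset M = m"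
  shows "M = balanced_parts R m"
proof -
  let ?f = "m div R"
  define a b where "a = count M (Suc ?f)" and "b = count M ?f"
  have M: "M = replicate_mset a (Suc ?f) + replicate_mset b ?f"
    by (rule multiset_eqI) (use assms(1) in \<open>auto simp: a_def b_def count_eq_zero_iff\<close>)
  then have ab: "a + b = R" "a * Suc ?f + b * ?f = m"
    using assms(2,3) by simp_all
  then have "a + R * ?f = m"
    using add_mult_distrib[of a b ?f] by simp
  then have "a = m mod R" by (metis add_right_cancel mod_div_mult_eq mult.commute)
  moreover have "b = R - a" using ab(1) by simp
  ultimately show ?thesis using M by (simp add: balanced_parts_def)
qed

lemma sum_mset_balanced_parts_eq_secant:
  fixes g :: "nat \<Rightarrow> real"
  assumes "size M = R" "sum_mset M = m" "R > 0"
  defines "f \<equiv> m div R"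
  shows "(\<Sum>L\<in>#balanced_parts R m. g L)
       = (\<Sum>L\<in>#M. g f + (real L - real f) * (g (Suc f) - g f))"
proof -
  let ?c = "g (Suc f) - g f"
  have affine: "g f + (real L - real f) * ?c = (g f - real f * ?c) + real L * ?c" for L
    by (simp add: algebra_simps)
  have "(\<Sum>L\<in>#balanced_parts R m. g L)
      = (\<Sum>L\<in>#balanced_parts R m. g f + (real L - real f) * ?c)"
    using set_balanced_parts[of R m] by (intro arg_cong[where f = sum_mset] image_mset_cong) (auto simp: f_def)
  also have "\<dots> = (\<Sum>L\<in>#M. g f + (real L - real f) * ?c)"
    unfolding affine sum_mset_affine
    using assms by (simp add: size_balanced_parts sum_mset_balanced_parts)
  finally show ?thesis .
qed

lemma sum_mset_balanced_parts_le:
  fixes g :: "nat \<Rightarrow> real"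
  assumes "strict_mono (\<lambda>a. g (Suc a) - g a)" "size M = R" "sum_mset M = m" "R > 0"
  shows "(\<Sum>L\<in>#balanced_parts R m. g L) \<le> (\<Sum>L\<in>#M. g L)"
proof -
  let ?f = "m div R"
  have "g ?f + (real L - real ?f) * (g (Suc ?f) - g ?f) \<le> g L" for L
    using secant_less[OF assms(1), of L ?f] by (cases "L = ?f \<or> L = Suc ?f") auto
  then show ?thesis
    unfolding sum_mset_balanced_parts_eq_secant[OF assms(2-4)] by (rule sum_mset_mono)
qed

lemma sum_mset_eq_balanced_parts_iff:
  fixes g :: "nat \<Rightarrow> real"
  assumes "strict_mono (\<lambda>a. g (Suc a) - g a)" "size M = R" "sum_mset M = m" "R > 0"
  shows "(\<Sum>L\<in>#M. g L) = (\<Sum>L\<in>#balanced_parts R m. g L) \<longleftrightarrow> M = balanced_parts R m"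
proof (intro iffI)
  let ?f = "m div R"
  let ?s = "\<lambda>L. g ?f + (real L - real ?f) * (g (Suc ?f) - g ?f)"
  assume sums_eq: "(\<Sum>L\<in>#M. g L) = (\<Sum>L\<in>#balanced_parts R m. g L)"
  show "M = balanced_parts R m"
  proof (rule eq_balanced_parts[OF _ assms(2,3)], rule ccontr)
    assume "\<not> set_mset M \<subseteq> {?f, Suc ?f}"
    then obtain L where "L \<in># M" and L: "L \<noteq> ?f" "L \<noteq> Suc ?f"
      by blast
    then obtain M' where M: "M = add_mset L M'"
      by (blast dest: multi_member_split)
    have "?s L < g L" using secant_less[OF assms(1) L] .
    moreover have "?s L' \<le> g L'" for L'
      using secant_less[OF assms(1), of L' ?f] by (cases "L' = ?f \<or> L' = Suc ?f") auto
    then have "(\<Sum>L\<in>#M'. ?s L) \<le> (\<Sum>L\<in>#M'. g L)" by (rule sum_mset_mono)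
    ultimately have "(\<Sum>L\<in>#M. ?s L) < (\<Sum>L\<in>#M. g L)" by (simp add: M)
    then show False
      using sums_eq sum_mset_balanced_parts_eq_secant[OF assms(2-4), of g] by simp
  qed
qed simp

lemma xlnx_midpoint_strict_convex:
  fixes a :: real
  assumes "a > 0"
  shows "2 * (a + 1) * ln (a + 1) < a * ln a + (a + 2) * ln (a + 2)"
proof -
  have ln_less: "ln x < x - 1" if "x > 0" "x \<noteq> 1" for x :: real
    using that ln_le_minus_one ln_eq_minus_one by fastforce
  have "a * ln ((a + 1) / a) < a * ((a + 1) / a - 1)"
    using assms by (intro mult_strict_left_mono ln_less) auto
  then have below: "a * ln a > a * ln (a + 1) - 1"
    using assms by (simp add: ln_div field_simps)
  have "(a + 2) * ln ((a + 1) / (a + 2)) < (a + 2) * ((a + 1) / (a + 2) - 1)"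
    using assms by (intro mult_strict_left_mono ln_less) auto
  then have above: "(a + 2) * ln (a + 2) > (a + 2) * ln (a + 1) + 1"
    using assms by (simp add: ln_div field_simps)
  show ?thesis using below above by (simp add: algebra_simps)
qed

lemma strict_mono_xlog2x_increments: "strict_mono (\<lambda>a. xlog2x (Suc a) - xlog2x a)"
proof (unfold strict_mono_Suc_iff, intro allI)
  fix a :: nat
  show "xlog2x (Suc a) - xlog2x a < xlog2x (Suc (Suc a)) - xlog2x (Suc a)"
  proof (cases "a = 0")
    case False
    then have "2 * (real a + 1) * ln (real a + 1) < real a * ln (real a) + (real a + 2) * ln (real a + 2)"
      by (intro xlnx_midpoint_strict_convex) simp
    then have "2 * (real a + 1) * ln (real a + 1) / ln 2
        < (real a * ln (real a) + (real a + 2) * ln (real a + 2)) / ln 2"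
      by (intro divide_strict_right_mono) auto
    then show ?thesis
      by (simp add: xlog2x_def log_def add_divide_distrib algebra_simps)
  qed (simp add: xlog2x_def)
qed

section \<open>Channel outputs with balanced runs\<close>

fun alternating :: "nat list \<Rightarrow> 'a \<Rightarrow> 'a \<Rightarrow> 'a list" where
  "alternating [] a b = []"
| "alternating (L # Ls) a b = replicate L a @ alternating Ls b a"

lemma set_alternating: "set (alternating Ls a b) \<subseteq> {a, b}"
  by (induction Ls arbitrary: a b) auto

lemma run_lengths_alternating:
  assumes "a \<noteq> b" "0 \<notin> set Ls"
  shows "run_lengths (alternating Ls a b) = Ls"
  using assms
proof (induction Ls arbitrary: a b)
  case (Cons L Ls)
  have "alternating Ls b a = [] \<or> hd (alternating Ls b a) \<noteq> a"
    using Cons.prems by (cases Ls) auto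
  then show ?case using Cons by (simp add: run_lengths_replicate_append)
qed simp

lemma exists_seq_with_run_lengths:
  assumes "q \<ge> 2" "0 \<notin> set Ls"
  shows "\<exists>y \<in> seqs q (sum_list Ls). run_lengths y = Ls"
proof
  let ?y = "alternating Ls 0 (1::nat)"
  show runs: "run_lengths ?y = Ls"
    using assms(2) by (simp add: run_lengths_alternating)
  have "length ?y = sum_list Ls"
    using sum_list_run_lengths[of ?y] runs by simp
  moreover have "set ?y \<subseteq> {0..<q}"
    using set_alternating[of Ls 0 1] assms(1) by fastforce
  ultimately show "?y \<in> seqs q (sum_list Ls)"
    by (simp add: seqs_def)
qed

lemma run_lengths_seqs_runs:
  assumes "y \<in> seqs_runs q R m"
  shows "length (run_lengths y) = R" "sum_list (run_lengths y) = m"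
  using assms sum_list_run_lengths[of y] by (auto simp: seqs_runs_def num_runs_def seqs_def)

lemma finite_seqs_runs: "finite (seqs_runs q R m)"
  using finite_seqs[of q m] by (rule finite_subset[rotated]) (auto simp: seqs_runs_def)

lemma balanced_output_exists:
  assumes "q \<ge> 2" "0 < R" "R \<le> m"
  shows "\<exists>y \<in> seqs_runs q R m. mset (run_lengths y) = balanced_parts R m"
proof -
  let ?Ls = "sorted_list_of_multiset (balanced_parts R m)"
  have "m div R \<ge> 1"
    using assms(2,3) div_le_mono[of R m R] by simp
  then have "0 \<notin> set ?Ls"
    using set_balanced_parts[of R m] by auto
  then obtain y where y: "y \<in> seqs q (sum_list ?Ls)" "run_lengths y = ?Ls"
    using exists_seq_with_run_lengths[OF assms(1)] by blast
  have "sum_list ?Ls = m" "length ?Ls = R"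
    using assms(2) sum_mset_balanced_parts[of R m] size_balanced_parts[of R m]
    by (simp_all flip: sum_mset_sum_list size_mset)
  then show ?thesis
    using y by (auto simp: seqs_runs_def num_runs_def)
qed

lemma balanced_parts_eq_ceiling_floor:
  assumes "R > 0"
  shows "balanced_parts R m =
           replicate_mset (m mod R) (nat \<lceil>real m / real R\<rceil>)
         + replicate_mset (R - m mod R) (nat \<lfloor>real m / real R\<rfloor>)"
proof -
  have floor: "nat \<lfloor>real m / real R\<rfloor> = m div R"
    by (metis floor_divide_of_nat_eq nat_int)
  have "nat \<lceil>real m / real R\<rceil> = Suc (m div R)" if "m mod R \<noteq> 0"
  proof -
    have "real m / real R = real (m div R) + real (m mod R) / real R"
      using assms by (simp add: field_simps flip: of_nat_mult of_nat_add)
    moreover have "0 < real (m mod R) / real R" "real (m mod R) / real R < 1"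
      using that assms by auto
    ultimately have "\<lceil>real m / real R\<rceil> = int (Suc (m div R))"
      by (subst ceiling_eq_iff) auto
    then show ?thesis by simp
  qed
  then show ?thesis
    by (cases "m mod R = 0") (simp_all add: balanced_parts_def floor)
qed

lemma H_in_seqs_runs:
  assumes "y \<in> seqs_runs q R (Suc n)" "q > 0"
  shows "H_in q n y = log 2 (Suc n) - (\<Sum>L\<in>#mset (run_lengths y). xlog2x L) / Suc n"
    and "size (mset (run_lengths y)) = R" "sum_mset (mset (run_lengths y)) = Suc n"
  using H_in_eq_run_lengths[of y q n] run_lengths_seqs_runs[of y q R "Suc n"] assms
  by (simp_all add: seqs_runs_def sum_mset_sum_list)

lemma H_in_le_balanced:
  assumes "y \<in> seqs_runs q R (Suc n)" "q > 0" "R > 0"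
  shows "H_in q n y \<le> log 2 (Suc n) - (\<Sum>L\<in>#balanced_parts R (Suc n). xlog2x L) / Suc n"
  using sum_mset_balanced_parts_le[OF strict_mono_xlog2x_increments
      H_in_seqs_runs(2,3)[OF assms(1,2)] assms(3)]
  unfolding H_in_seqs_runs(1)[OF assms(1,2)] by (simp add: divide_right_mono)

lemma H_in_eq_balanced_iff:
  assumes "y \<in> seqs_runs q R (Suc n)" "q > 0" "R > 0"
  shows "H_in q n y = log 2 (Suc n) - (\<Sum>L\<in>#balanced_parts R (Suc n). xlog2x L) / Suc n
     \<longleftrightarrow> mset (run_lengths y) = balanced_parts R (Suc n)"
  using sum_mset_eq_balanced_parts_iff[OF strict_mono_xlog2x_increments
      H_in_seqs_runs(2,3)[OF assms(1,2)] assms(3)]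
  unfolding H_in_seqs_runs(1)[OF assms(1,2)] by simp

theorem lemma9:
  fixes q n m R r :: nat
  assumes "q \<ge> 2" and "n \<ge> 1" and "m = n + 1"
    and "1 \<le> R" and "R \<le> m" and "r = m mod R"
  shows "Max (H_in q n ` seqs_runs q R m) =
           log 2 (real m) - (1 / real m) *
             (real r * real (nat \<lceil>real m / real R\<rceil>) * log 2 (real (nat \<lceil>real m / real R\<rceil>))
              + real (R - r) * real (nat \<lfloor>real m / real R\<rfloor>) * log 2 (real (nat \<lfloor>real m / real R\<rfloor>)))
       \<and> (\<forall>y \<in> seqs_runs q R m. H_in q n y = Max (H_in q n ` seqs_runs q R m) \<longrightarrow> balanced R m y)"
proof -
  have R: "R > 0" and q: "q > 0" and m: "m = Suc n" using assms(1,3,4) by simp_all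
  define V where "V = log 2 (real m) - (\<Sum>L\<in>#balanced_parts R m. xlog2x L) / real m"
  obtain y0 where y0: "y0 \<in> seqs_runs q R m" "mset (run_lengths y0) = balanced_parts R m"
    using balanced_output_exists[OF assms(1) R assms(5)] by blast
  then have "H_in q n y0 = V"
    using H_in_eq_balanced_iff[of y0 q R n] q R m by (simp add: V_def)
  then have Max: "Max (H_in q n ` seqs_runs q R m) = V"
    using H_in_le_balanced[of _ q R n] y0(1) q R m unfolding V_def
    by (intro Max_eqI finite_imageI finite_seqs_runs) (auto intro: rev_image_eqI)
  have "balanced R m y" if "y \<in> seqs_runs q R m" "H_in q n y = V" for y
    using H_in_eq_balanced_iff[of y q R n] that q R m
    by (simp add: V_def balanced_def balanced_parts_eq_ceiling_floor[OF R])
  moreover have "V = log 2 (real m) - (1 / real m) *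
             (real r * real (nat \<lceil>real m / real R\<rceil>) * log 2 (real (nat \<lceil>real m / real R\<rceil>))
              + real (R - r) * real (nat \<lfloor>real m / real R\<rfloor>) * log 2 (real (nat \<lfloor>real m / real R\<rfloor>)))"
    by (simp add: V_def balanced_parts_eq_ceiling_floor[OF R] assms(6) xlog2x_def)
  ultimately show ?thesis using Max by auto
qed

end
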